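(* In the setting of the context, fix distinct integers $r,s$ with $0\le r,s\le d$. The following are equivalent: (i) in $\Delta$, vertex $r$ is adjacent to vertex $s$ and to no other vertex; (ii) there exists $\kappa\in\mathbb F$ such that $(A^*-\kappa I)E_rV=E_sV$. Moreover, if (i) and (ii) hold then $\kappa=a^*_r$.
   Context: Let $\mathbb F$ be a field, $d\ge1$ an integer, $V$ a vector space over $\mathbb F$ of dimension $d+1$, $\mathcal A=\mathrm{End}(V)$ with identity $I$. Let $E^*_0,\dots,E^*_d\in\mathcal A$ satisfy $E^*_iE^*_j=\delta_{i,j}E^*_i$ and $\mathrm{rank}(E^*_i)=1$ for $0\le i,j\le d$. Let $A\in\mathcal A$ satisfy $E^*_iAE^*_j=0$ if $|i-j|>1$ and $E^*_iAE^*_j\neq0$ if $|i-j|=1$. Assume $A$ has $d+1$ mutually distinct eigenvalues $\theta_0,\dots,\theta_d$ in $\mathbb F$, and let $E_i=\prod_{j\ne i}\frac{A-\theta_jI}{\theta_i-\theta_j}$ be the primitive idempotent of $A$ for $\theta_i$. Let $\theta^*_0,\dots,\theta^*_d\in\mathbb F$ and $A^*=\sum_{i=0}^d\theta^*_iE^*_i$. Define $a^*_i=\mathrm{tr}(E_iA^* )$. Let $\Delta$ be the graph on vertex set $\{0,\dots,d\}$ in which $i,j$ are adjacent iff $i\ne j$ and $E_iA^*E_j\ne0$. *)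

theory Defs
  imports "Jordan_Normal_Form.Char_Poly" "Jordan_Normal_Form.DL_Rank"
begin

text \<open>Matrices over a field 'a of size (d+1) x (d+1) represent End(V), dim V = d+1.\<close>

definition mat_trace :: "'a::comm_ring_1 mat \<Rightarrow> 'a" where
  "mat_trace M = (\<Sum>i<dim_row M. M $$ (i, i))"

definition range_mat :: "'a::comm_ring_1 mat \<Rightarrow> 'a vec set" where
  "range_mat M = (\<lambda>x. M *\<^sub>v x) ` carrier_vec (dim_col M)"

definition mat_image :: "'a::comm_ring_1 mat \<Rightarrow> 'a vec set \<Rightarrow> 'a vec set" where
  "mat_image B W = (\<lambda>w. B *\<^sub>v w) ` W"

definition mat_sum_upto :: "nat \<Rightarrow> nat \<Rightarrow> (nat \<Rightarrow> 'a::comm_ring_1 mat) \<Rightarrow> 'a mat" where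
  "mat_sum_upto n d f = foldr (\<lambda>i M. f i + M) [0..<Suc d] (0\<^sub>m n n)"

text \<open>Primitive idempotent E_i = prod_{j \<noteq> i} (A - th_j I)/(th_i - th_j).
  The factors commute, so the order of the product is immaterial.\<close>
definition prim_idem :: "nat \<Rightarrow> 'a::field mat \<Rightarrow> (nat \<Rightarrow> 'a) \<Rightarrow> nat \<Rightarrow> 'a mat" where
  "prim_idem d A th i = foldr (\<lambda>j M. if j = i then M
       else (inverse (th i - th j) \<cdot>\<^sub>m (A - th j \<cdot>\<^sub>m 1\<^sub>m (Suc d))) * M)
     [0..<Suc d] (1\<^sub>m (Suc d))"

end

theory Submission
  imports Defs
begin

text \<open>
  Both \<open>A\<close> and \<open>A\<^sup>*\<close> are self-adjoint for one nondegenerate bilinear form \<open>(x, y) \<mapsto> x\<^sup>T G y\<close>.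
  In a basis adapted to the \<open>E\<^sup>*\<^sub>i\<close> the matrix of \<open>A\<close> is irreducible tridiagonal, so a diagonal
  rescaling symmetrizes it, while \<open>A\<^sup>*\<close> is diagonal there; this produces \<open>G\<close>. In an eigenbasis
  of \<open>A\<close> the form becomes diagonal (it commutes with a diagonal matrix with distinct entries) and
  invertible, so the matrix \<open>B\<close> of \<open>A\<^sup>*\<close> in that basis satisfies \<open>B\<^sub>i\<^sub>j \<noteq> 0 \<longleftrightarrow> B\<^sub>j\<^sub>i \<noteq> 0\<close>.
  Since \<open>E\<^sub>i A\<^sup>* E\<^sub>j \<noteq> 0 \<longleftrightarrow> B\<^sub>i\<^sub>j \<noteq> 0\<close>, both conditions say that column \<open>r\<close> of \<open>B\<close> is supported
  on \<open>{r, s}\<close> with \<open>B\<^sub>s\<^sub>r \<noteq> 0\<close>, and then \<open>\<kappa> = B\<^sub>r\<^sub>r = tr (E\<^sub>r A\<^sup>*)\<close>.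
\<close>

lemma mat_trace_mult_comm:
  assumes "(X :: 'a::comm_ring_1 mat) \<in> carrier_mat n m" and "Y \<in> carrier_mat m n"
  shows "mat_trace (X * Y) = mat_trace (Y * X)"
proof -
  have "mat_trace (X * Y) = (\<Sum>i<n. \<Sum>k<m. X $$ (i, k) * Y $$ (k, i))"
    unfolding mat_trace_def using assms by (auto simp: scalar_prod_def lessThan_atLeast0 intro!: sum.cong)
  also have "\<dots> = (\<Sum>k<m. \<Sum>i<n. Y $$ (k, i) * X $$ (i, k))"
    by (subst sum.swap) (simp add: mult.commute)
  also have "\<dots> = mat_trace (Y * X)"
    unfolding mat_trace_def using assms by (auto simp: scalar_prod_def lessThan_atLeast0 intro!: sum.cong)
  finally show ?thesis .
qed

lemma transpose_mat_diag[simp]: "transpose_mat (mat_diag n f) = mat_diag n f"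
  by (auto simp: mat_diag_def)

lemma det_mat_diag: "det (mat_diag n f) = (\<Prod>i<n. f i :: 'a::comm_ring_1)"
proof -
  have "upper_triangular (mat_diag n f)" by (auto simp: upper_triangular_def mat_diag_def)
  then have "det (mat_diag n f) = prod_list (diag_mat (mat_diag n f))"
    by (rule det_upper_triangular[OF _ mat_diag_dim])
  also have "diag_mat (mat_diag n f) = map f [0..<n]"
    by (auto simp: diag_mat_def mat_diag_def intro!: map_cong)
  finally show ?thesis by (simp add: prod.list_conv_set_nth atLeast0LessThan)
qed

lemma mat_diag_commute_imp_diagonal:
  assumes M: "(M :: 'a::idom mat) \<in> carrier_mat n n"
    and inj: "inj_on f {..<n}"
    and comm: "mat_diag n f * M = M * mat_diag n f"
  shows "M = mat_diag n (\<lambda>a. M $$ (a, a))"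
proof (rule eq_matI)
  fix a b assume "a < dim_row (mat_diag n (\<lambda>a. M $$ (a, a)))" "b < dim_col (mat_diag n (\<lambda>a. M $$ (a, a)))"
  then have ab: "a < n" "b < n" by (auto simp: mat_diag_def)
  have "f a * M $$ (a, b) = M $$ (a, b) * f b"
    using arg_cong[OF comm, of "\<lambda>X. X $$ (a, b)"] M ab
    by (simp add: mat_diag_mult_left[OF M] mat_diag_mult_right[OF M])
  then have "(f a - f b) * M $$ (a, b) = 0" by (simp add: algebra_simps)
  moreover have "a \<noteq> b \<Longrightarrow> f a \<noteq> f b" using inj ab by (auto dest: inj_onD)
  ultimately show "M $$ (a, b) = mat_diag n (\<lambda>a. M $$ (a, a)) $$ (a, b)"
    using ab by (auto simp: mat_diag_def)
qed (use M in \<open>auto simp: mat_diag_def\<close>)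

definition diag_unit_mat :: "nat \<Rightarrow> nat \<Rightarrow> 'a::comm_ring_1 mat" where
  "diag_unit_mat n i = mat_diag n (\<lambda>j. if j = i then 1 else 0)"

lemma diag_unit_mat_carrier[simp]: "diag_unit_mat n i \<in> carrier_mat n n"
  by (simp add: diag_unit_mat_def)

lemma diag_unit_mat_mult_vec:
  assumes "z \<in> carrier_vec n" and "i < n"
  shows "diag_unit_mat n i *\<^sub>v z = z $ i \<cdot>\<^sub>v (unit_vec n i :: 'a::comm_ring_1 vec)"
  using assms by (auto simp: diag_unit_mat_def mat_diag_def scalar_prod_def sum.remove[of _ i] intro!: eq_vecI)

lemma diag_unit_mat_sandwich:
  assumes X: "X \<in> carrier_mat n n"
  shows "diag_unit_mat n i * X * diag_unit_mat n j
    = mat n n (\<lambda>(a, b). if a = i \<and> b = j then X $$ (i, j) else (0 :: 'a::comm_ring_1))"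
  unfolding diag_unit_mat_def using X
  by (auto simp: mat_diag_mult_left[OF X] mat_diag_mult_right[of _ n] intro!: eq_matI)

lemma diag_unit_mat_sandwich_eq_0_iff:
  assumes "X \<in> carrier_mat n n" and "i < n" and "j < n"
  shows "diag_unit_mat n i * X * diag_unit_mat n j = 0\<^sub>m n n \<longleftrightarrow> X $$ (i, j) = (0 :: 'a::comm_ring_1)"
proof
  assume "diag_unit_mat n i * X * diag_unit_mat n j = 0\<^sub>m n n"
  then have "(diag_unit_mat n i * X * diag_unit_mat n j) $$ (i, j) = 0" using assms by simp
  then show "X $$ (i, j) = 0" using assms by (simp add: diag_unit_mat_sandwich)
qed (use assms in \<open>auto simp: diag_unit_mat_sandwich intro!: eq_matI\<close>)

lemma mat_trace_diag_unit_mult: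
  assumes "X \<in> carrier_mat n n" and "r < n"
  shows "mat_trace (diag_unit_mat n r * X) = (X $$ (r, r) :: 'a::comm_ring_1)"
  using assms by (auto simp: diag_unit_mat_def mat_diag_mult_left mat_trace_def sum.remove[of _ r])

lemma col_eq_mult_unit_vec:
  assumes "A \<in> carrier_mat m n" and "i < n"
  shows "col A i = A *\<^sub>v (unit_vec n i :: 'a::semiring_1 vec)"
  using col_mult2[OF assms(1) one_carrier_mat assms(2)] assms by (simp add: right_mult_one_mat)

lemma smult_mat_mult_vec:
  "A \<in> carrier_mat m n \<Longrightarrow> v \<in> carrier_vec n \<Longrightarrow> (c \<cdot>\<^sub>m A) *\<^sub>v v = c \<cdot>\<^sub>v (A *\<^sub>v v :: 'a::comm_ring_1 vec)"
  by (intro eq_vecI) (auto simp: scalar_prod_def sum_distrib_left ac_simps)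

lemma mat_image_line:
  assumes "K \<in> carrier_mat n n" and "v \<in> carrier_vec n"
  shows "mat_image K (range (\<lambda>a. a \<cdot>\<^sub>v v)) = range (\<lambda>a. a \<cdot>\<^sub>v (K *\<^sub>v v :: 'a::field vec))"
  unfolding mat_image_def image_image using mult_mat_vec[OF assms] by simp

lemma line_eq_line_iff:
  assumes v: "v \<in> carrier_vec n" and w: "w \<in> carrier_vec n" and "v \<noteq> 0\<^sub>v n"
  shows "range (\<lambda>a. a \<cdot>\<^sub>v w) = range (\<lambda>a. a \<cdot>\<^sub>v v) \<longleftrightarrow> (\<exists>\<mu>. \<mu> \<noteq> 0 \<and> w = \<mu> \<cdot>\<^sub>v (v :: 'a::field vec))"
proof
  assume lines: "range (\<lambda>a. a \<cdot>\<^sub>v w) = range (\<lambda>a. a \<cdot>\<^sub>v v)"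
  have "v \<in> range (\<lambda>a. a \<cdot>\<^sub>v v)" using v by (auto intro!: range_eqI[of _ _ 1])
  then obtain a where a: "v = a \<cdot>\<^sub>v w" unfolding lines[symmetric] by auto
  then have "a \<noteq> 0" using \<open>v \<noteq> 0\<^sub>v n\<close> w by auto
  then show "\<exists>\<mu>. \<mu> \<noteq> 0 \<and> w = \<mu> \<cdot>\<^sub>v v"
    using a w by (intro exI[of _ "inverse a"]) (auto simp: smult_smult_assoc)
next
  assume "\<exists>\<mu>. \<mu> \<noteq> 0 \<and> w = \<mu> \<cdot>\<^sub>v v"
  then obtain \<mu> where "\<mu> \<noteq> 0" and w_eq: "w = \<mu> \<cdot>\<^sub>v v" by auto
  have "a \<cdot>\<^sub>v v = (a * inverse \<mu>) \<cdot>\<^sub>v w" for a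
    using \<open>\<mu> \<noteq> 0\<close> by (simp add: w_eq smult_smult_assoc mult.assoc)
  then show "range (\<lambda>a. a \<cdot>\<^sub>v w) = range (\<lambda>a. a \<cdot>\<^sub>v v)"
    unfolding w_eq by (auto simp: smult_smult_assoc)
qed

definition symmetric_wrt :: "'a::comm_ring_1 mat \<Rightarrow> 'a mat \<Rightarrow> bool" where
  "symmetric_wrt G X \<longleftrightarrow> transpose_mat X * G = G * X"

text \<open>The columns of \<open>P\<close> form a basis and \<open>Q = P\<^sup>-\<^sup>1\<close>; \<open>P * diag_unit_mat n i * Q\<close> is the
  projection onto the \<open>i\<close>-th basis vector along the others, and \<open>Q * X * P\<close> is the matrix of \<open>X\<close>
  in the basis.\<close>

locale basis_change =
  fixes n :: nat and P Q :: "'a::field mat"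
  assumes P_carrier[simp]: "P \<in> carrier_mat n n" and Q_carrier[simp]: "Q \<in> carrier_mat n n"
    and left_inverse: "Q * P = 1\<^sub>m n"
begin

lemmas square_mult_simps =
  assoc_mult_mat[of _ n n _ n _ n] mult_carrier_mat[of _ n n _ n] assoc_mult_mat_vec[of _ n n _ n]
  right_mult_one_mat[of _ n n] left_mult_one_mat[of _ n n]

lemma dims[simp]: "dim_row P = n" "dim_col P = n" "dim_row Q = n" "dim_col Q = n"
  using carrier_matD[OF P_carrier] carrier_matD[OF Q_carrier] by auto

lemmas mult_vec_carrier[simp] = mult_mat_vec_carrier[OF P_carrier] mult_mat_vec_carrier[OF Q_carrier]

lemma right_inverse: "P * Q = 1\<^sub>m n"
  by (rule mat_mult_left_right_inverse[OF Q_carrier P_carrier left_inverse])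

lemma transpose_inverse:
  "transpose_mat P * transpose_mat Q = 1\<^sub>m n" "transpose_mat Q * transpose_mat P = 1\<^sub>m n"
  by (metis transpose_mult[OF Q_carrier P_carrier] left_inverse transpose_one)
    (metis transpose_mult[OF P_carrier Q_carrier] right_inverse transpose_one)

lemma det_nonzero: "det P \<noteq> 0" "det Q \<noteq> 0"
  using det_mult[OF Q_carrier P_carrier] left_inverse by auto

lemma cancel[simp]:
  assumes "X \<in> carrier_mat n n"
  shows "Q * (P * X) = X" and "P * (Q * X) = X"
    and "transpose_mat P * (transpose_mat Q * X) = X" and "transpose_mat Q * (transpose_mat P * X) = X"
  using assms by (simp_all add: left_inverse right_inverse transpose_inverse
      flip: assoc_mult_mat[of _ n n _ n _ n])

lemma conj_eq_0_iff:
  assumes "Y \<in> carrier_mat n n"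
  shows "P * Y * Q = 0\<^sub>m n n \<longleftrightarrow> Y = 0\<^sub>m n n"
proof -
  have "Y = Q * (P * Y * Q) * P"
    using assms by (simp add: square_mult_simps left_inverse)
  then show ?thesis
    using assms by (auto simp: right_mult_zero_mat[of _ n n] left_mult_zero_mat[of _ n n])
qed

lemma sandwich_eq_0_iff:
  assumes "X \<in> carrier_mat n n" and "i < n" and "j < n"
  shows "(P * diag_unit_mat n i * Q) * X * (P * diag_unit_mat n j * Q) = 0\<^sub>m n n
    \<longleftrightarrow> (Q * X * P) $$ (i, j) = 0"
proof -
  have "(P * diag_unit_mat n i * Q) * X * (P * diag_unit_mat n j * Q) = 0\<^sub>m n n
      \<longleftrightarrow> P * (diag_unit_mat n i * (Q * X * P) * diag_unit_mat n j) * Q = 0\<^sub>m n n"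
    using assms by (simp add: square_mult_simps)
  also have "\<dots> \<longleftrightarrow> diag_unit_mat n i * (Q * X * P) * diag_unit_mat n j = 0\<^sub>m n n"
    using assms by (intro conj_eq_0_iff) (auto simp: square_mult_simps)
  also have "\<dots> \<longleftrightarrow> (Q * X * P) $$ (i, j) = 0"
    using assms by (intro diag_unit_mat_sandwich_eq_0_iff) (auto simp: square_mult_simps)
  finally show ?thesis .
qed

lemma mat_trace_sandwich:
  assumes "X \<in> carrier_mat n n" and "r < n"
  shows "mat_trace (P * diag_unit_mat n r * Q * X) = (Q * X * P) $$ (r, r)"
proof -
  have "mat_trace (P * diag_unit_mat n r * Q * X) = mat_trace (P * (diag_unit_mat n r * Q * X))"
    using assms by (simp add: square_mult_simps)
  also have "\<dots> = mat_trace (diag_unit_mat n r * Q * X * P)"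
    using assms by (intro mat_trace_mult_comm[of _ n n]) (auto simp: square_mult_simps)
  also have "\<dots> = mat_trace (diag_unit_mat n r * (Q * X * P))"
    using assms by (simp add: square_mult_simps)
  finally show ?thesis using assms by (simp add: mat_trace_diag_unit_mult[of _ n] square_mult_simps)
qed

lemma P_mult_vec_eq_iff:
  assumes "x \<in> carrier_vec n" and "y \<in> carrier_vec n"
  shows "P *\<^sub>v x = P *\<^sub>v y \<longleftrightarrow> x = y"
proof
  assume "P *\<^sub>v x = P *\<^sub>v y"
  then have "(Q * P) *\<^sub>v x = (Q * P) *\<^sub>v y" using assms by (simp add: square_mult_simps)
  then show "x = y" using assms by (simp add: left_inverse)
qed simp

lemma col_P_nonzero: "i < n \<Longrightarrow> col P i \<noteq> 0\<^sub>v n"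
proof -
  have "P *\<^sub>v 0\<^sub>v n = 0\<^sub>v n" by (intro eq_vecI) auto
  then show "i < n \<Longrightarrow> col P i \<noteq> 0\<^sub>v n"
    using P_mult_vec_eq_iff[of "unit_vec n i" "0\<^sub>v n"] by (simp add: col_eq_mult_unit_vec[OF P_carrier])
qed

lemma sandwich_mult_vec:
  assumes "y \<in> carrier_vec n" and "i < n"
  shows "(P * diag_unit_mat n i * Q) *\<^sub>v y = (Q *\<^sub>v y) $ i \<cdot>\<^sub>v col P i"
proof -
  have "(P * diag_unit_mat n i * Q) *\<^sub>v y = P *\<^sub>v (diag_unit_mat n i *\<^sub>v (Q *\<^sub>v y))"
    using assms by (simp add: square_mult_simps)
  also have "diag_unit_mat n i *\<^sub>v (Q *\<^sub>v y) = (Q *\<^sub>v y) $ i \<cdot>\<^sub>v unit_vec n i"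
    using assms by (intro diag_unit_mat_mult_vec) auto
  also have "P *\<^sub>v ((Q *\<^sub>v y) $ i \<cdot>\<^sub>v unit_vec n i) = (Q *\<^sub>v y) $ i \<cdot>\<^sub>v col P i"
    using assms by (simp add: mult_mat_vec[of _ n n] col_eq_mult_unit_vec[OF P_carrier])
  finally show ?thesis .
qed

lemma range_mat_sandwich:
  assumes "i < n"
  shows "range_mat (P * diag_unit_mat n i * Q) = range (\<lambda>a. a \<cdot>\<^sub>v col P i)"
proof (intro equalityI subsetI)
  fix x assume "x \<in> range_mat (P * diag_unit_mat n i * Q)"
  then obtain y where "y \<in> carrier_vec n" and "x = (P * diag_unit_mat n i * Q) *\<^sub>v y"
    by (auto simp: range_mat_def)
  then show "x \<in> range (\<lambda>a. a \<cdot>\<^sub>v col P i)"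
    using assms by (simp add: sandwich_mult_vec)
next
  fix x assume "x \<in> range (\<lambda>a. a \<cdot>\<^sub>v col P i)"
  then obtain a where x: "x = a \<cdot>\<^sub>v col P i" by auto
  have "Q *\<^sub>v col P i = unit_vec n i"
    using assms col_mult2[OF Q_carrier P_carrier assms] by (simp add: left_inverse)
  then have "(P * diag_unit_mat n i * Q) *\<^sub>v x = x"
    using assms by (simp add: x sandwich_mult_vec mult_mat_vec[of _ n n])
  moreover have "x \<in> carrier_vec n" using assms by (simp add: x)
  ultimately show "x \<in> range_mat (P * diag_unit_mat n i * Q)"
    unfolding range_mat_def by (intro image_eqI[of _ _ x]) (auto simp: square_mult_simps)
qed

lemma mat_image_sandwich_eq_range_iff:
  assumes X: "X \<in> carrier_mat n n" and r: "r < n" and s: "s < n" and "r \<noteq> s"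
  shows "mat_image (X - \<kappa> \<cdot>\<^sub>m 1\<^sub>m n) (range_mat (P * diag_unit_mat n r * Q))
      = range_mat (P * diag_unit_mat n s * Q)
    \<longleftrightarrow> (Q * X * P) $$ (s, r) \<noteq> 0 \<and> \<kappa> = (Q * X * P) $$ (r, r)
      \<and> (\<forall>t<n. t \<noteq> r \<and> t \<noteq> s \<longrightarrow> (Q * X * P) $$ (t, r) = 0)"
proof -
  define B where "B = Q * X * P"
  define w where "w = col B r - \<kappa> \<cdot>\<^sub>v unit_vec n r"
  have B: "B \<in> carrier_mat n n" using X by (simp add: B_def square_mult_simps)
  have w: "w \<in> carrier_vec n" using B r by (simp add: w_def)
  have "col B r = Q *\<^sub>v (X *\<^sub>v col P r)"
    using X r by (simp add: B_def square_mult_simps col_mult2[of _ n n _ n])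
  then have "P *\<^sub>v col B r = (P * Q) *\<^sub>v (X *\<^sub>v col P r)"
    using X r by (simp add: square_mult_simps)
  then have "P *\<^sub>v col B r = X *\<^sub>v col P r"
    using X r by (simp add: right_inverse)
  then have image_of_col: "(X - \<kappa> \<cdot>\<^sub>m 1\<^sub>m n) *\<^sub>v col P r = P *\<^sub>v w"
    using X B r by (simp add: w_def minus_mult_distrib_mat_vec[of _ n n] mult_minus_distrib_mat_vec[of _ n n]
        mult_mat_vec[of _ n n] smult_mat_mult_vec[of _ n n] col_eq_mult_unit_vec[OF P_carrier])
  have "mat_image (X - \<kappa> \<cdot>\<^sub>m 1\<^sub>m n) (range (\<lambda>a. a \<cdot>\<^sub>v col P r)) = range (\<lambda>a. a \<cdot>\<^sub>v (P *\<^sub>v w))"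
    unfolding image_of_col[symmetric] using X r by (intro mat_image_line) auto
  then have "mat_image (X - \<kappa> \<cdot>\<^sub>m 1\<^sub>m n) (range_mat (P * diag_unit_mat n r * Q))
      = range_mat (P * diag_unit_mat n s * Q)
    \<longleftrightarrow> range (\<lambda>a. a \<cdot>\<^sub>v (P *\<^sub>v w)) = range (\<lambda>a. a \<cdot>\<^sub>v col P s)"
    using r s by (simp add: range_mat_sandwich)
  also have "\<dots> \<longleftrightarrow> (\<exists>\<mu>. \<mu> \<noteq> 0 \<and> P *\<^sub>v w = \<mu> \<cdot>\<^sub>v col P s)"
    using w s by (intro line_eq_line_iff[of _ n]) (auto simp: col_P_nonzero)
  also have "\<dots> \<longleftrightarrow> (\<exists>\<mu>. \<mu> \<noteq> 0 \<and> w = \<mu> \<cdot>\<^sub>v unit_vec n s)"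
    using w s by (simp add: col_eq_mult_unit_vec[OF P_carrier] mult_mat_vec[of _ n n] flip: P_mult_vec_eq_iff)
  also have "\<dots> \<longleftrightarrow> B $$ (s, r) \<noteq> 0 \<and> \<kappa> = B $$ (r, r) \<and> (\<forall>t<n. t \<noteq> r \<and> t \<noteq> s \<longrightarrow> B $$ (t, r) = 0)"
  proof
    assume "\<exists>\<mu>. \<mu> \<noteq> 0 \<and> w = \<mu> \<cdot>\<^sub>v unit_vec n s"
    then obtain \<mu> where "\<mu> \<noteq> 0" and w_eq: "w = \<mu> \<cdot>\<^sub>v unit_vec n s" by blast
    have entry: "B $$ (t, r) - (if t = r then \<kappa> else 0) = (if t = s then \<mu> else 0)" if "t < n" for t
      using arg_cong[OF w_eq, of "\<lambda>v. v $ t"] B r s that by (auto simp: w_def split: if_splits)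
    show "B $$ (s, r) \<noteq> 0 \<and> \<kappa> = B $$ (r, r) \<and> (\<forall>t<n. t \<noteq> r \<and> t \<noteq> s \<longrightarrow> B $$ (t, r) = 0)"
      using entry[OF s] entry[OF r] entry \<open>\<mu> \<noteq> 0\<close> \<open>r \<noteq> s\<close> by force
  next
    assume "B $$ (s, r) \<noteq> 0 \<and> \<kappa> = B $$ (r, r) \<and> (\<forall>t<n. t \<noteq> r \<and> t \<noteq> s \<longrightarrow> B $$ (t, r) = 0)"
    then have "w = B $$ (s, r) \<cdot>\<^sub>v unit_vec n s"
      using B r s \<open>r \<noteq> s\<close> by (auto simp: w_def intro!: eq_vecI)
    then show "\<exists>\<mu>. \<mu> \<noteq> 0 \<and> w = \<mu> \<cdot>\<^sub>v unit_vec n s"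
      using \<open>B $$ (s, r) \<noteq> 0 \<and> _\<close> by blast
  qed
  finally show ?thesis by (simp only: B_def)
qed

lemma eigen_cols_diagonalize:
  assumes A: "A \<in> carrier_mat n n" and eig: "\<And>k. k < n \<Longrightarrow> A *\<^sub>v col P k = th k \<cdot>\<^sub>v col P k"
  shows "A = P * mat_diag n th * Q"
proof -
  have "A * P = P * mat_diag n th"
  proof (rule eq_matI)
    fix a b assume "a < dim_row (P * mat_diag n th)" "b < dim_col (P * mat_diag n th)"
    then have ab: "a < n" "b < n" by (auto simp: mat_diag_def)
    have "(A * P) $$ (a, b) = (A *\<^sub>v col P b) $ a" using A ab by simp
    then show "(A * P) $$ (a, b) = (P * mat_diag n th) $$ (a, b)"
      using ab by (simp add: eig mat_diag_mult_right[of _ n n] mult.commute)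
  qed (use A in \<open>auto simp: mat_diag_def\<close>)
  then have "A * P * Q = P * mat_diag n th * Q" by simp
  then show ?thesis using A by (simp add: assoc_mult_mat[OF A P_carrier Q_carrier] right_inverse)
qed

lemma sum_sandwich_diag_unit:
  assumes "distinct xs" and "set xs \<subseteq> {..<n}"
  shows "foldr (\<lambda>i M. c i \<cdot>\<^sub>m (P * diag_unit_mat n i * Q) + M) xs (0\<^sub>m n n)
    = P * mat_diag n (\<lambda>a. if a \<in> set xs then c a else 0) * Q"
  using assms
proof (induction xs)
  case Nil
  have "mat_diag n (\<lambda>a. 0) = (0\<^sub>m n n :: 'a mat)" by (auto simp: mat_diag_def)
  then show ?case by (simp add: right_mult_zero_mat[of _ n n] left_mult_zero_mat[of _ n n])
next
  case (Cons j xs)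
  have diag: "c j \<cdot>\<^sub>m diag_unit_mat n j + mat_diag n (\<lambda>a. if a \<in> set xs then c a else 0)
      = mat_diag n (\<lambda>a. if a \<in> set (j # xs) then c a else 0)"
    using Cons.prems by (auto simp: diag_unit_mat_def mat_diag_def)
  have "c j \<cdot>\<^sub>m (P * diag_unit_mat n j * Q) + P * mat_diag n (\<lambda>a. if a \<in> set xs then c a else 0) * Q
      = P * (c j \<cdot>\<^sub>m diag_unit_mat n j + mat_diag n (\<lambda>a. if a \<in> set xs then c a else 0)) * Q"
    by (simp add: mult_add_distrib_mat[of _ n n _ n] add_mult_distrib_mat[of _ n n _ _ n]
        mult_smult_distrib[of _ n n _ n] mult_smult_assoc_mat[of _ n n _ n] mult_carrier_mat[of _ n n _ n])
  then show ?case using Cons by (simp add: diag)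
qed

lemma mat_sum_upto_sandwich:
  assumes "n = Suc d"
  shows "mat_sum_upto n d (\<lambda>i. c i \<cdot>\<^sub>m (P * diag_unit_mat n i * Q)) = P * mat_diag n c * Q"
proof -
  have "mat_sum_upto n d (\<lambda>i. c i \<cdot>\<^sub>m (P * diag_unit_mat n i * Q))
      = P * mat_diag n (\<lambda>a. if a \<in> set [0..<n] then c a else 0) * Q"
    unfolding mat_sum_upto_def assms[symmetric] by (rule sum_sandwich_diag_unit) auto
  also have "mat_diag n (\<lambda>a. if a \<in> set [0..<n] then c a else 0) = mat_diag n c"
    by (auto simp: mat_diag_def intro!: eq_matI)
  finally show ?thesis .
qed

lemma symmetric_wrt_sandwich:
  assumes "T \<in> carrier_mat n n" and "D \<in> carrier_mat n n" and "symmetric_wrt D T"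
  shows "symmetric_wrt (transpose_mat Q * D * Q) (P * T * Q)"
proof -
  have "transpose_mat (P * T * Q) = transpose_mat Q * transpose_mat T * transpose_mat P"
    using assms(1) by (simp add: transpose_mult[of _ n n _ n] square_mult_simps)
  then have "transpose_mat (P * T * Q) * (transpose_mat Q * D * Q) = transpose_mat Q * (transpose_mat T * D) * Q"
    using assms(1,2) by (simp add: square_mult_simps)
  also have "\<dots> = transpose_mat Q * D * Q * (P * T * Q)"
    using assms by (simp add: symmetric_wrt_def square_mult_simps)
  finally show ?thesis unfolding symmetric_wrt_def .
qed

lemma symmetric_wrt_nonzero_pattern:
  assumes G: "G \<in> carrier_mat n n" and "det G \<noteq> 0" and inj: "inj_on th {..<n}"
    and sym_diag: "symmetric_wrt G (P * mat_diag n th * Q)"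
    and X: "X \<in> carrier_mat n n" and sym_X: "symmetric_wrt G X"
    and a: "a < n" and b: "b < n"
  shows "(Q * X * P) $$ (a, b) = 0 \<longleftrightarrow> (Q * X * P) $$ (b, a) = 0"
proof -
  txt \<open>The form in the eigenbasis commutes with the diagonal matrix of the distinct \<open>th a\<close>.\<close>
  define M where "M = transpose_mat P * G * P"
  define B where "B = Q * X * P"
  have M: "M \<in> carrier_mat n n" and B: "B \<in> carrier_mat n n"
    using G X by (simp_all add: M_def B_def square_mult_simps)
  have "mat_diag n th * M = transpose_mat P * (transpose_mat (P * mat_diag n th * Q) * G) * P"
    using G by (simp add: M_def transpose_mult[of _ n n _ n] square_mult_simps)
  also have "\<dots> = M * mat_diag n th"
    using G sym_diag by (simp add: M_def symmetric_wrt_def square_mult_simps left_inverse)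
  finally have M_diag: "M = mat_diag n (\<lambda>a. M $$ (a, a))"
    using M inj by (intro mat_diag_commute_imp_diagonal)
  have "det M \<noteq> 0"
    using G \<open>det G \<noteq> 0\<close> det_nonzero(1)
    by (simp add: M_def det_mult[of _ n] det_transpose[OF P_carrier] square_mult_simps)
  then have M_nonzero: "M $$ (a, a) \<noteq> 0" if "a < n" for a
    using that by (subst (asm) M_diag) (simp add: det_mat_diag)
  have "transpose_mat B * M = transpose_mat P * (transpose_mat X * G) * P"
    using G X by (simp add: M_def B_def transpose_mult[of _ n n _ n] square_mult_simps)
  also have "\<dots> = M * B"
    using G X sym_X by (simp add: M_def B_def symmetric_wrt_def square_mult_simps)
  finally have "(transpose_mat B * M) $$ (a, b) = (M * B) $$ (a, b)" by simp
  then have "B $$ (b, a) * M $$ (b, b) = M $$ (a, a) * B $$ (a, b)"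
    using a b B by (subst (asm) (1 2) M_diag) (simp add: mat_diag_mult_left mat_diag_mult_right[of _ n])
  then show ?thesis
    using M_nonzero a b by (auto simp: B_def)
qed

end

lemma det_nonzero_imp_basis_change:
  assumes P: "(P :: 'a::field mat) \<in> carrier_mat n n" and "det P \<noteq> 0"
  obtains Q where "basis_change n P Q"
proof -
  obtain Q where "Q \<in> carrier_mat n n" and "Q * P = 1\<^sub>m n"
    using det_non_zero_imp_unit[OF assms, of "()"] unfolding Units_def ring_mat_def by auto
  then show thesis using P by (intro that) (unfold_locales)
qed

lemma common_eigenbasis:
  fixes v :: "nat \<Rightarrow> 'a::field vec" and F :: "nat \<Rightarrow> 'a mat"
  assumes v: "\<And>k. k < n \<Longrightarrow> v k \<in> carrier_vec n" and v_nonzero: "\<And>k. k < n \<Longrightarrow> v k \<noteq> 0\<^sub>v n"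
    and F: "\<And>i. i < n \<Longrightarrow> F i \<in> carrier_mat n n"
    and F_v: "\<And>i k. i < n \<Longrightarrow> k < n \<Longrightarrow> F i *\<^sub>v v k = (if i = k then v k else 0\<^sub>v n)"
  obtains P Q where "basis_change n P Q" and "\<And>k. k < n \<Longrightarrow> col P k = v k"
    and "\<And>i. i < n \<Longrightarrow> F i = P * diag_unit_mat n i * Q"
proof -
  define P where "P = mat n n (\<lambda>(a, b). v b $ a)"
  have P: "P \<in> carrier_mat n n" by (simp add: P_def)
  have col_P: "col P k = v k" if "k < n" for k
    using v[OF that] that by (auto simp: P_def intro!: eq_vecI)
  have F_P: "F i * P = P * diag_unit_mat n i" if i: "i < n" for i
  proof (rule eq_matI)
    fix a b assume "a < dim_row (P * diag_unit_mat n i)" "b < dim_col (P * diag_unit_mat n i)"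
    then have ab: "a < n" "b < n" by (auto simp: P_def diag_unit_mat_def mat_diag_def)
    have "(F i * P) $$ (a, b) = (F i *\<^sub>v v b) $ a"
      using F[OF i] P ab by (simp flip: col_P)
    moreover have "(P * diag_unit_mat n i) $$ (a, b) = P $$ (a, b) * (if b = i then 1 else 0)"
      using ab by (simp add: diag_unit_mat_def mat_diag_mult_right[OF P])
    ultimately show "(F i * P) $$ (a, b) = (P * diag_unit_mat n i) $$ (a, b)"
      using i ab v by (auto simp: F_v P_def)
  qed (use F P i in \<open>auto simp: diag_unit_mat_def mat_diag_def\<close>)
  have "det P \<noteq> 0"
  proof
    assume "det P = 0"
    then obtain c where c: "c \<in> carrier_vec n" "c \<noteq> 0\<^sub>v n" "P *\<^sub>v c = 0\<^sub>v n"
      using det_0_iff_vec_prod_zero_field[OF P] by auto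
    have "c $ i = 0" if i: "i < n" for i
    proof -
      have "c $ i \<cdot>\<^sub>v v i = P *\<^sub>v (diag_unit_mat n i *\<^sub>v c)"
        using c i P by (simp add: diag_unit_mat_mult_vec mult_mat_vec[OF P] col_eq_mult_unit_vec flip: col_P)
      also have "\<dots> = (F i * P) *\<^sub>v c"
        unfolding F_P[OF i] by (rule assoc_mult_mat_vec[OF P diag_unit_mat_carrier c(1), symmetric])
      also have "\<dots> = 0\<^sub>v n"
        using F[OF i] P c by (auto intro!: eq_vecI)
      finally have "c $ i \<cdot>\<^sub>v v i = 0\<^sub>v n" .
      moreover obtain a where "a < n" and "v i $ a \<noteq> 0"
        using v_nonzero[OF i] v[OF i] by (metis eq_vecI carrier_vecD index_zero_vec)
      ultimately show "c $ i = 0"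
        by (metis index_smult_vec(1) index_zero_vec(1) carrier_vecD[OF v[OF i]] mult_eq_0_iff)
    qed
    then show False using c by (auto intro!: eq_vecI)
  qed
  then obtain Q where "basis_change n P Q" by (rule det_nonzero_imp_basis_change[OF P])
  then interpret basis_change n P Q .
  have F_eq: "F i = P * diag_unit_mat n i * Q" if "i < n" for i
  proof -
    have "F i = F i * (P * Q)" using F[OF that] by (simp add: right_inverse)
    also have "\<dots> = P * diag_unit_mat n i * Q"
      using F[OF that] by (simp add: F_P[OF that] flip: assoc_mult_mat[of _ n n _ n _ n])
    finally show ?thesis .
  qed
  show thesis by (rule that[OF \<open>basis_change n P Q\<close> col_P F_eq])
qed




lemma mat_nonzero_imp_mult_vec_nonzero:
  assumes X: "X \<in> carrier_mat m n" and "X \<noteq> 0\<^sub>m m n"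
  obtains x where "x \<in> carrier_vec n" and "X *\<^sub>v x \<noteq> (0\<^sub>v m :: 'a::semiring_1 vec)"
proof (rule ccontr)
  assume "\<not> thesis"
  then have "X *\<^sub>v unit_vec n b = 0\<^sub>v m" for b using that[OF unit_vec_carrier] by blast
  then have "X = 0\<^sub>m m n"
    using X by (intro eq_matI) (auto simp: col_eq_mult_unit_vec simp flip: index_col)
  with \<open>X \<noteq> 0\<^sub>m m n\<close> show False ..
qed

lemma orthogonal_idempotents_basis_change:
  fixes F :: "nat \<Rightarrow> 'a::field mat"
  assumes F: "\<And>i. i < n \<Longrightarrow> F i \<in> carrier_mat n n"
    and F_mult: "\<And>i j. i < n \<Longrightarrow> j < n \<Longrightarrow> F i * F j = (if i = j then F i else 0\<^sub>m n n)"
    and F_nonzero: "\<And>i. i < n \<Longrightarrow> F i \<noteq> 0\<^sub>m n n"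
  obtains P Q where "basis_change n P Q" and "\<And>i. i < n \<Longrightarrow> F i = P * diag_unit_mat n i * Q"
proof -
  have "\<exists>x. k < n \<longrightarrow> x \<in> carrier_vec n \<and> F k *\<^sub>v x \<noteq> 0\<^sub>v n" for k
    using mat_nonzero_imp_mult_vec_nonzero[OF F F_nonzero] by metis
  then obtain x where x: "\<And>k. k < n \<Longrightarrow> x k \<in> carrier_vec n" "\<And>k. k < n \<Longrightarrow> F k *\<^sub>v x k \<noteq> 0\<^sub>v n"
    by metis
  have F_v: "F i *\<^sub>v (F k *\<^sub>v x k) = (if i = k then F k *\<^sub>v x k else 0\<^sub>v n)" if "i < n" "k < n" for i k
    using F_mult[OF that] F that x by (auto simp flip: assoc_mult_mat_vec[of _ n n _ n] intro!: eq_vecI)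
  show thesis
    by (rule common_eigenbasis[of n "\<lambda>k. F k *\<^sub>v x k" F]) (use F x F_v that in \<open>auto intro: mult_mat_vec_carrier\<close>)
qed

lemma tridiagonal_symmetrizable:
  fixes T :: "'a::field mat"
  assumes T: "T \<in> carrier_mat n n"
    and far: "\<And>a b. a < n \<Longrightarrow> b < n \<Longrightarrow> b + 1 < a \<or> a + 1 < b \<Longrightarrow> T $$ (a, b) = 0"
    and near: "\<And>i. Suc i < n \<Longrightarrow> T $$ (i, Suc i) \<noteq> 0 \<and> T $$ (Suc i, i) \<noteq> 0"
  obtains c where "\<And>a. a < n \<Longrightarrow> c a \<noteq> 0" and "symmetric_wrt (mat_diag n c) T"
proof
  txt \<open>\<open>c (Suc i) / c i = T\<^sub>i\<^sub>,\<^sub>i\<^sub>+\<^sub>1 / T\<^sub>i\<^sub>+\<^sub>1\<^sub>,\<^sub>i\<close> makes \<open>mat_diag n c * T\<close> symmetric.\<close>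
  define c where "c = rec_nat 1 (\<lambda>i x. x * T $$ (i, Suc i) / T $$ (Suc i, i))"
  have c_Suc: "c (Suc i) = c i * T $$ (i, Suc i) / T $$ (Suc i, i)" for i
    by (simp add: c_def)
  show c_nonzero: "c a \<noteq> 0" if "a < n" for a
    using that by (induction a) (auto simp: c_def near)
  have c_sym: "c a * T $$ (a, b) = c b * T $$ (b, a)" if "a < n" "b < n" for a b
  proof -
    consider "a = b" | "b = Suc a" | "a = Suc b" | "b + 1 < a \<or> a + 1 < b" by linarith
    then show ?thesis
      by cases (use that near in \<open>auto simp: c_Suc far\<close>)
  qed
  show "symmetric_wrt (mat_diag n c) T"
    unfolding symmetric_wrt_def using T
    by (auto simp: mat_diag_mult_left mat_diag_mult_right[of _ n n] c_sym mult.commute)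
qed


lemma prim_idem_factors_carrier:
  assumes "A \<in> carrier_mat n n"
  shows "foldr (\<lambda>j M. if j = i then M else (inverse (th i - th j) \<cdot>\<^sub>m (A - th j \<cdot>\<^sub>m 1\<^sub>m n)) * M) xs (1\<^sub>m n)
    \<in> carrier_mat n n"
  using assms by (induction xs) (auto intro!: mult_carrier_mat[of _ n n _ n] simp: minus_carrier_mat)

lemma prim_idem_factors_mult_eigenvector:
  fixes A :: "'a::field mat"
  assumes A: "A \<in> carrier_mat n n" and v: "v \<in> carrier_vec n" and Av: "A *\<^sub>v v = \<mu> \<cdot>\<^sub>v v"
  shows "foldr (\<lambda>j M. if j = i then M else (inverse (th i - th j) \<cdot>\<^sub>m (A - th j \<cdot>\<^sub>m 1\<^sub>m n)) * M) xs (1\<^sub>m n) *\<^sub>v v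
    = (\<Prod>j\<leftarrow>xs. if j = i then 1 else inverse (th i - th j) * (\<mu> - th j)) \<cdot>\<^sub>v v"
proof (induction xs)
  case (Cons j xs)
  let ?K = "inverse (th i - th j) \<cdot>\<^sub>m (A - th j \<cdot>\<^sub>m 1\<^sub>m n)"
  have K: "?K \<in> carrier_mat n n" using A by (simp add: minus_carrier_mat)
  have "(A - th j \<cdot>\<^sub>m 1\<^sub>m n) *\<^sub>v v = (\<mu> - th j) \<cdot>\<^sub>v v"
    using A v by (auto simp: minus_mult_distrib_mat_vec[of _ n n] smult_mat_mult_vec[of _ n n] Av
        left_diff_distrib intro!: eq_vecI)
  then have "?K *\<^sub>v v = (inverse (th i - th j) * (\<mu> - th j)) \<cdot>\<^sub>v v"
    using A v by (simp add: smult_mat_mult_vec[of _ n n] minus_carrier_mat smult_smult_assoc)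
  moreover have "(?K * R) *\<^sub>v v = ?K *\<^sub>v (R *\<^sub>v v)" if "R \<in> carrier_mat n n" for R
    using K that v by simp
  ultimately show ?case
    using K v Cons.IH prim_idem_factors_carrier[OF A, of i th xs]
    by (simp add: mult_mat_vec[of _ n n] smult_smult_assoc mult.commute)
qed (simp add: v)

lemma prim_idem_carrier:
  "A \<in> carrier_mat (Suc d) (Suc d) \<Longrightarrow> prim_idem d A th i \<in> carrier_mat (Suc d) (Suc d)"
  unfolding prim_idem_def by (rule prim_idem_factors_carrier)

lemma prim_idem_mult_eigenvector:
  fixes A :: "'a::field mat"
  assumes A: "A \<in> carrier_mat (Suc d) (Suc d)" and v: "v \<in> carrier_vec (Suc d)"
    and Av: "A *\<^sub>v v = th k \<cdot>\<^sub>v v" and k: "k \<le> d"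
    and distinct: "\<And>j. j \<le> d \<Longrightarrow> j \<noteq> i \<Longrightarrow> th j \<noteq> th i"
  shows "prim_idem d A th i *\<^sub>v v = (if i = k then v else 0\<^sub>v (Suc d))"
proof -
  let ?c = "\<lambda>j. if j = i then 1 else inverse (th i - th j) * (th k - th j)"
  have "prim_idem d A th i *\<^sub>v v = prod_list (map ?c [0..<Suc d]) \<cdot>\<^sub>v v"
    unfolding prim_idem_def by (rule prim_idem_factors_mult_eigenvector[OF A v Av])
  also have "prod_list (map ?c [0..<Suc d]) = (\<Prod>j<Suc d. ?c j)"
    by (subst prod.distinct_set_conv_list[symmetric]) (auto simp: atLeast0LessThan)
  also have "\<dots> = (if i = k then 1 else 0)"
  proof (cases "i = k")
    case True
    then have "?c j = 1" if "j < Suc d" for j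
      using distinct[of j] that by auto
    then show ?thesis using True by simp
  next
    case False
    then have "?c k = 0" and "k \<in> {..<Suc d}" using k by auto
    then have "(\<Prod>j<Suc d. ?c j) = 0" by (intro prod_zero) blast+
    then show ?thesis using False by simp
  qed
  finally show ?thesis using v by (auto intro!: eq_vecI)
qed

lemma prim_idem_eigenbasis:
  fixes A :: "'a::field mat"
  assumes A: "A \<in> carrier_mat (Suc d) (Suc d)"
    and eigenvalue: "\<And>i. i \<le> d \<Longrightarrow> eigenvalue A (th i)"
    and distinct: "\<And>i j. i \<le> d \<Longrightarrow> j \<le> d \<Longrightarrow> i \<noteq> j \<Longrightarrow> th i \<noteq> th j"
  obtains P Q where "basis_change (Suc d) P Q" and "A = P * mat_diag (Suc d) th * Q"
    and "\<And>i. i \<le> d \<Longrightarrow> prim_idem d A th i = P * diag_unit_mat (Suc d) i * Q"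
proof -
  obtain v where v: "\<And>k. k \<le> d \<Longrightarrow> eigenvector A (v k) (th k)"
    using eigenvalue unfolding eigenvalue_def by metis
  then have v_carrier: "\<And>k. k < Suc d \<Longrightarrow> v k \<in> carrier_vec (Suc d)"
    and v_nonzero: "\<And>k. k < Suc d \<Longrightarrow> v k \<noteq> 0\<^sub>v (Suc d)"
    and Av: "\<And>k. k < Suc d \<Longrightarrow> A *\<^sub>v v k = th k \<cdot>\<^sub>v v k"
    using A by (auto simp: eigenvector_def less_Suc_eq_le)
  have E_v: "prim_idem d A th i *\<^sub>v v k = (if i = k then v k else 0\<^sub>v (Suc d))"
    if "i < Suc d" "k < Suc d" for i k
    using that distinct by (intro prim_idem_mult_eigenvector[OF A v_carrier Av]) auto
  obtain P Q where PQ: "basis_change (Suc d) P Q" and col_P: "\<And>k. k < Suc d \<Longrightarrow> col P k = v k"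
    and E: "\<And>i. i < Suc d \<Longrightarrow> prim_idem d A th i = P * diag_unit_mat (Suc d) i * Q"
    by (rule common_eigenbasis[of "Suc d" v "prim_idem d A th"])
      (use v_carrier v_nonzero prim_idem_carrier[OF A] E_v in auto)
  have "A = P * mat_diag (Suc d) th * Q"
    using A Av col_P by (intro basis_change.eigen_cols_diagonalize[OF PQ]) auto
  then show thesis using E by (intro that[OF PQ]) auto
qed

lemma mat_sum_upto_carrier:
  assumes "\<And>i. i \<le> d \<Longrightarrow> f i \<in> carrier_mat n n"
  shows "mat_sum_upto n d f \<in> carrier_mat n n"
proof -
  have foldr_carrier: "foldr (\<lambda>i M. f i + M) xs (0\<^sub>m n n) \<in> carrier_mat n n" if "set xs \<subseteq> {..d}" for xs
    using that assms by (induction xs) auto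
  show ?thesis unfolding mat_sum_upto_def by (rule foldr_carrier) auto
qed

lemma tridiagonal_sandwich_factor_nonzero:
  fixes A :: "'a::field mat" and Es :: "nat \<Rightarrow> 'a mat"
  assumes "d \<ge> 1" and A: "A \<in> carrier_mat (Suc d) (Suc d)"
    and Es: "\<And>i. i \<le> d \<Longrightarrow> Es i \<in> carrier_mat (Suc d) (Suc d)"
    and near: "\<And>i j. i \<le> d \<Longrightarrow> j \<le> d \<Longrightarrow> i = j + 1 \<or> j = i + 1 \<Longrightarrow> Es i * A * Es j \<noteq> 0\<^sub>m (Suc d) (Suc d)"
    and "k \<le> d"
  shows "Es k \<noteq> 0\<^sub>m (Suc d) (Suc d)"
proof
  assume "Es k = 0\<^sub>m (Suc d) (Suc d)"
  define j where "j = (if k < d then Suc k else k - 1)"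
  have "j \<le> d" and "k = j + 1 \<or> j = k + 1" using \<open>k \<le> d\<close> \<open>d \<ge> 1\<close> by (auto simp: j_def)
  then have "j \<le> d" and "Es k * A * Es j \<noteq> 0\<^sub>m (Suc d) (Suc d)" using near[of k j] \<open>k \<le> d\<close> by auto
  with \<open>Es k = 0\<^sub>m (Suc d) (Suc d)\<close> show False using A Es[of j] by simp
qed

lemma tridiagonal_symmetrizing_form:
  fixes A :: "'a::field mat" and Es :: "nat \<Rightarrow> 'a mat"
  assumes "d \<ge> 1" and A: "A \<in> carrier_mat (Suc d) (Suc d)"
    and Es: "\<And>i. i \<le> d \<Longrightarrow> Es i \<in> carrier_mat (Suc d) (Suc d)"
    and Es_mult: "\<And>i j. i \<le> d \<Longrightarrow> j \<le> d \<Longrightarrow> Es i * Es j = (if i = j then Es i else 0\<^sub>m (Suc d) (Suc d))"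
    and far: "\<And>i j. i \<le> d \<Longrightarrow> j \<le> d \<Longrightarrow> j + 1 < i \<or> i + 1 < j \<Longrightarrow> Es i * A * Es j = 0\<^sub>m (Suc d) (Suc d)"
    and near: "\<And>i j. i \<le> d \<Longrightarrow> j \<le> d \<Longrightarrow> i = j + 1 \<or> j = i + 1 \<Longrightarrow> Es i * A * Es j \<noteq> 0\<^sub>m (Suc d) (Suc d)"
  obtains G where "G \<in> carrier_mat (Suc d) (Suc d)" and "det G \<noteq> 0" and "symmetric_wrt G A"
    and "symmetric_wrt G (mat_sum_upto (Suc d) d (\<lambda>i. ths i \<cdot>\<^sub>m Es i))"
proof -
  let ?n = "Suc d"
  have "Es k \<noteq> 0\<^sub>m ?n ?n" if "k < ?n" for k
    using tridiagonal_sandwich_factor_nonzero[OF \<open>d \<ge> 1\<close> A Es near] that by (simp add: less_Suc_eq_le)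
  then obtain U W where UW: "basis_change ?n U W"
    and Es_eq: "\<And>i. i < ?n \<Longrightarrow> Es i = U * diag_unit_mat ?n i * W"
    using orthogonal_idempotents_basis_change[of ?n Es] Es Es_mult by (auto simp: less_Suc_eq_le)
  interpret basis_change ?n U W by (rule UW)
  define T where "T = W * A * U"
  have T: "T \<in> carrier_mat ?n ?n" using A by (simp add: T_def square_mult_simps)
  have T_eq_0_iff: "T $$ (i, j) = 0 \<longleftrightarrow> Es i * A * Es j = 0\<^sub>m ?n ?n" if "i < ?n" "j < ?n" for i j
    using sandwich_eq_0_iff[OF A that] that by (simp add: T_def Es_eq)
  obtain c where c: "\<And>a. a < ?n \<Longrightarrow> c a \<noteq> 0" and sym_T: "symmetric_wrt (mat_diag ?n c) T"
  proof (rule tridiagonal_symmetrizable[OF T])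
    show "T $$ (a, b) = 0" if "a < ?n" "b < ?n" "b + 1 < a \<or> a + 1 < b" for a b
      using that by (simp add: T_eq_0_iff far)
    show "T $$ (i, Suc i) \<noteq> 0 \<and> T $$ (Suc i, i) \<noteq> 0" if "Suc i < ?n" for i
      using that near[of i "Suc i"] near[of "Suc i" i] by (simp add: T_eq_0_iff)
  qed blast
  show thesis
  proof
    show "transpose_mat W * mat_diag ?n c * W \<in> carrier_mat ?n ?n" by (simp add: square_mult_simps)
    show "det (transpose_mat W * mat_diag ?n c * W) \<noteq> 0"
      using det_nonzero c by (simp add: det_mult[of _ ?n] det_transpose[OF Q_carrier] det_mat_diag square_mult_simps)
    have "A = U * T * W" using A by (simp add: T_def square_mult_simps right_inverse)
    then show "symmetric_wrt (transpose_mat W * mat_diag ?n c * W) A"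
      using T sym_T by (simp add: symmetric_wrt_sandwich)
    have "mat_sum_upto ?n d (\<lambda>i. ths i \<cdot>\<^sub>m Es i) = mat_sum_upto ?n d (\<lambda>i. ths i \<cdot>\<^sub>m (U * diag_unit_mat ?n i * W))"
      unfolding mat_sum_upto_def by (rule foldr_cong) (auto simp: Es_eq)
    also have "\<dots> = U * mat_diag ?n ths * W"
      by (rule mat_sum_upto_sandwich) simp
    moreover have "symmetric_wrt (mat_diag ?n c) (mat_diag ?n ths)"
      by (simp add: symmetric_wrt_def mult.commute)
    ultimately show "symmetric_wrt (transpose_mat W * mat_diag ?n c * W) (mat_sum_upto ?n d (\<lambda>i. ths i \<cdot>\<^sub>m Es i))"
      by (simp add: symmetric_wrt_sandwich)
  qed
qed

theorem lemma6p3: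
  fixes d :: nat and A :: "'a::field mat" and Es :: "nat \<Rightarrow> 'a mat"
    and th ths :: "nat \<Rightarrow> 'a" and r s :: nat
  assumes d1: "d \<ge> 1"
    and A_carr: "A \<in> carrier_mat (d+1) (d+1)"
    and Es_carr: "\<And>i. i \<le> d \<Longrightarrow> Es i \<in> carrier_mat (d+1) (d+1)"
    and Es_idem: "\<And>i j. i \<le> d \<Longrightarrow> j \<le> d \<Longrightarrow>
                   Es i * Es j = (if i = j then Es i else 0\<^sub>m (d+1) (d+1))"
    and Es_rank: "\<And>i. i \<le> d \<Longrightarrow> vec_space.rank (d+1) (Es i) = 1"
    and tri0: "\<And>i j. i \<le> d \<Longrightarrow> j \<le> d \<Longrightarrow> (i > j + 1 \<or> j > i + 1) \<Longrightarrow>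
                   Es i * A * Es j = 0\<^sub>m (d+1) (d+1)"
    and tri1: "\<And>i j. i \<le> d \<Longrightarrow> j \<le> d \<Longrightarrow> (i = j + 1 \<or> j = i + 1) \<Longrightarrow>
                   Es i * A * Es j \<noteq> 0\<^sub>m (d+1) (d+1)"
    and th_eig: "\<And>i. i \<le> d \<Longrightarrow> eigenvalue A (th i)"
    and th_dist: "\<And>i j. i \<le> d \<Longrightarrow> j \<le> d \<Longrightarrow> i \<noteq> j \<Longrightarrow> th i \<noteq> th j"
    and rs: "r \<le> d" "s \<le> d" "r \<noteq> s"
  shows "let As = mat_sum_upto (d+1) d (\<lambda>i. ths i \<cdot>\<^sub>m Es i);
             E = prim_idem d A th;
             adj = (\<lambda>i j. i \<noteq> j \<and> E i * As * E j \<noteq> 0\<^sub>m (d+1) (d+1));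
             cond_i = (adj r s \<and> (\<forall>t\<le>d. adj r t \<longrightarrow> t = s));
             cond_ii = (\<lambda>\<kappa>. mat_image (As - \<kappa> \<cdot>\<^sub>m 1\<^sub>m (d+1)) (range_mat (E r))
                             = range_mat (E s))
         in (cond_i \<longleftrightarrow> (\<exists>\<kappa>. cond_ii \<kappa>)) \<and>
            (\<forall>\<kappa>. cond_i \<and> cond_ii \<kappa> \<longrightarrow> \<kappa> = mat_trace (E r * As))"
proof -
  define As where "As = mat_sum_upto (Suc d) d (\<lambda>i. ths i \<cdot>\<^sub>m Es i)"
  define E where "E = prim_idem d A th"
  obtain G where G: "G \<in> carrier_mat (Suc d) (Suc d)" "det G \<noteq> 0" "symmetric_wrt G A" "symmetric_wrt G As"
    unfolding As_def by (rule tridiagonal_symmetrizing_form[of d A Es]) (use assms in auto)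
  obtain P Q where PQ: "basis_change (Suc d) P Q" and A_eq: "A = P * mat_diag (Suc d) th * Q"
    and E_eq: "\<And>i. i \<le> d \<Longrightarrow> E i = P * diag_unit_mat (Suc d) i * Q"
    unfolding E_def by (rule prim_idem_eigenbasis[of A d th]) (use A_carr th_eig th_dist in auto)
  interpret basis_change "Suc d" P Q by (rule PQ)
  define B where "B = Q * As * P"
  have As: "As \<in> carrier_mat (Suc d) (Suc d)"
    using Es_carr by (simp add: As_def mat_sum_upto_carrier)
  have "inj_on th {..<Suc d}"
    by (rule inj_onI) (use th_dist in \<open>fastforce simp: less_Suc_eq_le\<close>)
  then have pattern: "B $$ (a, b) = 0 \<longleftrightarrow> B $$ (b, a) = 0" if "a \<le> d" "b \<le> d" for a b
    using symmetric_wrt_nonzero_pattern[OF G(1,2) _ G(3)[unfolded A_eq] As G(4)] that by (simp add: B_def)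
  have adjacent_iff: "E r * As * E t \<noteq> 0\<^sub>m (Suc d) (Suc d) \<longleftrightarrow> B $$ (t, r) \<noteq> 0" if "t \<le> d" for t
    using sandwich_eq_0_iff[OF As, of r t] pattern[of r t] rs that by (simp add: E_eq B_def)
  have image_iff: "mat_image (As - \<kappa> \<cdot>\<^sub>m 1\<^sub>m (Suc d)) (range_mat (E r)) = range_mat (E s)
      \<longleftrightarrow> B $$ (s, r) \<noteq> 0 \<and> \<kappa> = B $$ (r, r) \<and> (\<forall>t\<le>d. t \<noteq> r \<and> t \<noteq> s \<longrightarrow> B $$ (t, r) = 0)" for \<kappa>
    using mat_image_sandwich_eq_range_iff[OF As, of r s \<kappa>] rs by (simp add: E_eq B_def less_Suc_eq_le)
  have trace: "mat_trace (E r * As) = B $$ (r, r)"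
    using mat_trace_sandwich[OF As, of r] rs by (simp add: E_eq B_def)
  have adjacency_iff: "((r \<noteq> s \<and> E r * As * E s \<noteq> 0\<^sub>m (Suc d) (Suc d))
      \<and> (\<forall>t\<le>d. r \<noteq> t \<and> E r * As * E t \<noteq> 0\<^sub>m (Suc d) (Suc d) \<longrightarrow> t = s))
    \<longleftrightarrow> B $$ (s, r) \<noteq> 0 \<and> (\<forall>t\<le>d. t \<noteq> r \<and> t \<noteq> s \<longrightarrow> B $$ (t, r) = 0)"
    using adjacent_iff rs by blast
  show ?thesis
    unfolding Let_def Suc_eq_plus1[symmetric] As_def[symmetric] E_def[symmetric] adjacency_iff image_iff trace
    by blast
qed

end
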